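(* Let $m\ge 3$ be odd, $n\ge2$, and let $\mathcal{A}=(a_{i_1\dots i_m})$ be a real symmetric $m$th order $n$-dimensional tensor which is strongly positive semi-definite. Then $a_{i_1\dots i_m}\ge 0$ whenever at least $m-1$ of the indices $i_1,\dots,i_m$ are equal. If furthermore $\mathcal{A}$ is strongly positive definite, then $a_{i_1\dots i_m}>0$ whenever at least $m-1$ of the indices $i_1,\dots,i_m$ are equal.
   Context: For $\mathbf{x}\in\mathbb{R}^n$, $\mathcal{A}\mathbf{x}^{m-1}$ is the vector with $i$th component $\sum_{i_2,\dots,i_m=1}^n a_{ii_2\dots i_m}x_{i_2}\cdots x_{i_m}$. For odd $m$ and symmetric $\mathcal{A}$, $\mathcal{A}$ is strongly positive semi-definite if $\mathcal{A}\mathbf{x}^{m-1}\ge\mathbf{0}$ componentwise for all $\mathbf{x}\in\mathbb{R}^n$, and strongly positive definite if $\mathcal{A}\mathbf{x}^{m-1}>\mathbf{0}$ componentwise for all nonzero $\mathbf{x}\in\mathbb{R}^n$. *)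

theory Defs
  imports Complex_Main "HOL-Library.Multiset"
begin

text \<open>A real m-th order n-dimensional tensor is a function on index lists
  of length m with entries in {0..<n} (indices are 0-based). Values outside
  this index set are irrelevant.\<close>

definition idx :: "nat \<Rightarrow> nat \<Rightarrow> nat list set" where
  "idx k n = {xs. length xs = k \<and> set xs \<subseteq> {..<n}}"

definition symmetric_tensor :: "nat \<Rightarrow> nat \<Rightarrow> (nat list \<Rightarrow> real) \<Rightarrow> bool" where
  "symmetric_tensor m n A \<longleftrightarrow>
     (\<forall>xs \<in> idx m n. \<forall>ys \<in> idx m n. mset xs = mset ys \<longrightarrow> A xs = A ys)"

text \<open>i-th component of A x^(m-1):
  sum over i_2..i_m of a_{i i_2 ... i_m} x_{i_2} ... x_{i_m}.\<close>
definition tensor_apply :: "nat \<Rightarrow> nat \<Rightarrow> (nat list \<Rightarrow> real) \<Rightarrow> (nat \<Rightarrow> real) \<Rightarrow> nat \<Rightarrow> real" where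
  "tensor_apply m n A x i = (\<Sum>ys \<in> idx (m - 1) n. A (i # ys) * (\<Prod>j<length ys. x (ys ! j)))"

definition strongly_psd :: "nat \<Rightarrow> nat \<Rightarrow> (nat list \<Rightarrow> real) \<Rightarrow> bool" where
  "strongly_psd m n A \<longleftrightarrow> (\<forall>x. \<forall>i<n. tensor_apply m n A x i \<ge> 0)"

definition strongly_pd :: "nat \<Rightarrow> nat \<Rightarrow> (nat list \<Rightarrow> real) \<Rightarrow> bool" where
  "strongly_pd m n A \<longleftrightarrow>
     (\<forall>x. (\<exists>j<n. x j \<noteq> 0) \<longrightarrow> (\<forall>i<n. tensor_apply m n A x i > 0))"

end

theory Submission
  imports Defs "HOL-Library.Indicator_Function"
begin

text \<open>Evaluating \<open>\<A>x\<^sup>m\<^sup>-\<^sup>1\<close> at the unit vector \<open>e\<^sub>j\<close> kills every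
  term except the one with \<open>i\<^sub>2 = \<dots> = i\<^sub>m = j\<close>, so its \<open>k\<close>-th component
  is the entry \<open>a\<^sub>k\<^sub>j\<^sub>\<dots>\<^sub>j\<close>. By symmetry, every entry with at least
  \<open>m - 1\<close> equal indices is of this form, hence inherits the sign of a component
  of \<open>\<A>e\<^sub>j\<^sup>m\<^sup>-\<^sup>1\<close>.\<close>

lemma finite_idx: "finite (idx k n)"
proof -
  have "idx k n = {xs. set xs \<subseteq> {..<n} \<and> length xs = k}"
    unfolding idx_def by auto
  then show ?thesis
    using finite_lists_length_eq[of "{..<n}" k] by simp
qed

lemma prod_indicator_nth:
  "(\<Prod>t<length ys. indicator {j} (ys ! t) :: real) = (if set ys \<subseteq> {j} then 1 else 0)"
proof -
  have "(\<Prod>t<length ys. indicator {j} (ys ! t) :: real) = prod_list (map (indicator {j}) ys)"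
    by (simp add: prod.list_conv_set_nth atLeast0LessThan)
  also have "\<dots> = (if set ys \<subseteq> {j} then 1 else 0)"
    by (induction ys) (auto simp: indicator_def)
  finally show ?thesis .
qed

lemma tensor_apply_indicator:
  assumes "j < n" and "m \<ge> 1"
  shows "tensor_apply m n A (indicator {j}) k = A (k # replicate (m - 1) j)"
proof -
  have "tensor_apply m n A (indicator {j}) k
      = (\<Sum>ys \<in> idx (m - 1) n. if replicate (m - 1) j = ys then A (k # ys) else 0)"
    unfolding tensor_apply_def
  proof (rule sum.cong)
    fix ys assume "ys \<in> idx (m - 1) n"
    then have "set ys \<subseteq> {j} \<longleftrightarrow> replicate (m - 1) j = ys"
      by (auto simp: idx_def intro: replicate_eqI[symmetric])
    then show "A (k # ys) * (\<Prod>t<length ys. indicator {j} (ys ! t))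
        = (if replicate (m - 1) j = ys then A (k # ys) else 0)"
      by (simp add: prod_indicator_nth)
  qed simp
  also have "\<dots> = A (k # replicate (m - 1) j)"
    using assms by (subst sum.delta'[OF finite_idx]) (auto simp: idx_def)
  finally show ?thesis .
qed

lemma symmetric_tensor_almost_constant_index:
  assumes "symmetric_tensor m n A" and "xs \<in> idx m n"
    and "count (mset xs) j \<ge> m - 1" and "m \<ge> 2"
  obtains k where "k < n" and "j < n" and "A xs = A (k # replicate (m - 1) j)"
proof -
  have len: "length xs = m" and sub: "set xs \<subseteq> {..<n}"
    using assms(2) by (auto simp: idx_def)
  have "replicate_mset (m - 1) j \<subseteq># mset xs"
    using assms(3) by (simp add: subseteq_mset_def count_replicate_mset)
  then have split: "mset xs = (mset xs - replicate_mset (m - 1) j) + replicate_mset (m - 1) j"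
    by simp
  have "size (mset xs - replicate_mset (m - 1) j) = 1"
    using arg_cong[OF split, of size] len assms(4) by simp
  then obtain k where "mset xs - replicate_mset (m - 1) j = {#k#}"
    by (metis size_1_singleton_mset)
  with split have mset_eq: "mset xs = mset (k # replicate (m - 1) j)"
    by (simp add: add.commute)
  then have "set (k # replicate (m - 1) j) \<subseteq> {..<n}"
    using sub by (metis set_mset_mset)
  then have "k < n" and "j < n"
    using assms(4) by auto
  moreover have "k # replicate (m - 1) j \<in> idx m n"
    using \<open>k < n\<close> \<open>j < n\<close> assms(4) by (auto simp: idx_def)
  ultimately show ?thesis
    using that assms(1,2) mset_eq unfolding symmetric_tensor_def by blast
qed

theorem proposition3p2:
  fixes m n :: nat and A :: "nat list \<Rightarrow> real"
  assumes "odd m" and "m \<ge> 3" and "n \<ge> 2"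
    and "symmetric_tensor m n A"
    and "strongly_psd m n A"
  shows "(\<forall>xs \<in> idx m n. (\<exists>j. count (mset xs) j \<ge> m - 1) \<longrightarrow> A xs \<ge> 0) \<and>
         (strongly_pd m n A \<longrightarrow>
           (\<forall>xs \<in> idx m n. (\<exists>j. count (mset xs) j \<ge> m - 1) \<longrightarrow> A xs > 0))"
proof -
  have entry_is_component: "\<exists>k<n. \<exists>j<n. A xs = tensor_apply m n A (indicator {j}) k"
    if xs: "xs \<in> idx m n" and "\<exists>j. count (mset xs) j \<ge> m - 1" for xs
  proof -
    from that(2) obtain j where "count (mset xs) j \<ge> m - 1"
      by blast
    moreover have "m \<ge> 2"
      using assms(2) by simp
    ultimately obtain k where "k < n" "j < n" "A xs = A (k # replicate (m - 1) j)"
      using symmetric_tensor_almost_constant_index[OF assms(4) xs] by blast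
    moreover have "A (k # replicate (m - 1) j) = tensor_apply m n A (indicator {j}) k"
      using \<open>j < n\<close> \<open>m \<ge> 2\<close> by (simp add: tensor_apply_indicator)
    ultimately show ?thesis
      by auto
  qed
  show ?thesis
  proof (intro conjI impI ballI)
    fix xs assume "xs \<in> idx m n" "\<exists>j. count (mset xs) j \<ge> m - 1"
    with entry_is_component obtain k j where "k < n" "j < n"
      and "A xs = tensor_apply m n A (indicator {j}) k"
      by blast
    moreover have "\<exists>i<n. indicator {j} i \<noteq> (0::real)"
      using \<open>j < n\<close> by auto
    ultimately show "A xs \<ge> 0" and "strongly_pd m n A \<Longrightarrow> A xs > 0"
      using assms(5) unfolding strongly_psd_def strongly_pd_def by auto
  qed
qed

end
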